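(* Fix probability distributions $P$ and $Q$ on a common measurable space. Then the function $\gamma\mapsto D_{\infty,\gamma}(P,Q)$ is non-decreasing on $\gamma>0$.
   Context: The Tsallis $\gamma$-logarithm is $\log_\gamma(x)=\log x$ if $\gamma=1$ and $\log_\gamma(x)=\frac{x^{1-\gamma}-1}{1-\gamma}$ if $\gamma\ne1$, for $x\ge0$. The Tsallis $\gamma$-max-divergence is $D_{\infty,\gamma}(P,Q)=\sup_B\log_\gamma(P(B))-\log_\gamma(Q(B))$, supremum over measurable sets $B$. *)

theory Defs
  imports "HOL-Probability.Probability"
begin

text \<open>Tsallis gamma-logarithm on [0,inf), with values in the extended reals.
  At x = 0 we take the limit value: log 0 = -inf (gamma = 1),
  0 powr (1 - gamma) = +inf for gamma > 1 (hence value -inf), and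
  value -1/(1-gamma) for gamma < 1.\<close>
definition tsallis_log :: "real \<Rightarrow> real \<Rightarrow> ereal" where
  "tsallis_log \<gamma> x =
     (if x = 0 then (if \<gamma> < 1 then ereal (- 1 / (1 - \<gamma>)) else - \<infinity>)
      else if \<gamma> = 1 then ereal (ln x)
      else ereal ((x powr (1 - \<gamma>) - 1) / (1 - \<gamma>)))"

text \<open>Difference of extended reals with the convention (-inf) - (-inf) = -inf
  (the Isabelle default would give +inf).\<close>
definition tsallis_minus :: "ereal \<Rightarrow> ereal \<Rightarrow> ereal" where
  "tsallis_minus a b = (if a = - \<infinity> then - \<infinity> else a - b)"

definition tsallis_max_div :: "real \<Rightarrow> 'a measure \<Rightarrow> 'a measure \<Rightarrow> ereal" where
  "tsallis_max_div \<gamma> P Q =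
     (SUP B \<in> sets P. tsallis_minus (tsallis_log \<gamma> (measure P B)) (tsallis_log \<gamma> (measure Q B)))"

end

theory Submission
  imports Defs
begin

text \<open>For \<gamma>1 \<le> \<gamma>2 the difference of the two Tsallis logarithms has derivative
  x powr (-\<gamma>2) - x powr (-\<gamma>1) \<ge> 0 on (0,1], so for P(B) > Q(B) the increment
  log\<gamma>(P(B)) - log\<gamma>(Q(B)) grows with \<gamma>. For P(B) \<le> Q(B) the increment is nonpositive,
  hence dominated by the value 0 that B = \<Omega> contributes to every supremum.\<close>

definition tsallis_ln :: "real \<Rightarrow> real \<Rightarrow> real" where
  "tsallis_ln \<gamma> x = (if \<gamma> = 1 then ln x else (x powr (1 - \<gamma>) - 1) / (1 - \<gamma>))"

definition tsallis_gap :: "real \<Rightarrow> real \<Rightarrow> real \<Rightarrow> ereal" where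
  "tsallis_gap \<gamma> p q = tsallis_minus (tsallis_log \<gamma> p) (tsallis_log \<gamma> q)"

lemma tsallis_log_pos: "x > 0 \<Longrightarrow> tsallis_log \<gamma> x = ereal (tsallis_ln \<gamma> x)"
  by (simp add: tsallis_log_def tsallis_ln_def)

lemma tsallis_log_not_PInf: "tsallis_log \<gamma> x \<noteq> \<infinity>"
  by (simp add: tsallis_log_def)

lemma has_real_derivative_tsallis_ln:
  assumes "x > 0"
  shows "(tsallis_ln \<gamma> has_real_derivative x powr (- \<gamma>)) (at x)"
proof (cases "\<gamma> = 1")
  case True
  then show ?thesis
    using assms by (auto intro!: derivative_eq_intros simp: tsallis_ln_def[abs_def] powr_minus inverse_eq_divide)
next
  case False
  have "((\<lambda>x. (x powr (1 - \<gamma>) - 1) / (1 - \<gamma>)) has_real_derivative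
          ((1 - \<gamma>) * x powr (1 - \<gamma> - 1) - 0) / (1 - \<gamma>)) (at x)"
    by (intro DERIV_cdivide DERIV_diff has_real_derivative_powr assms DERIV_const)
  then show ?thesis
    using False by (simp add: tsallis_ln_def[abs_def])
qed

lemma tsallis_ln_mono:
  assumes "0 < a" "a \<le> b"
  shows "tsallis_ln \<gamma> a \<le> tsallis_ln \<gamma> b"
proof (rule DERIV_nonneg_imp_nondecreasing[OF assms(2)])
  fix x assume "a \<le> x"
  with assms show "\<exists>y. (tsallis_ln \<gamma> has_real_derivative y) (at x) \<and> y \<ge> 0"
    by (intro exI[of _ "x powr (- \<gamma>)"] conjI has_real_derivative_tsallis_ln) auto
qed

lemma tsallis_log_mono:
  assumes "0 \<le> a" "a \<le> b"
  shows "tsallis_log \<gamma> a \<le> tsallis_log \<gamma> b"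
proof (cases "a = 0")
  case True
  show ?thesis
  proof (cases "b = 0 \<or> \<gamma> \<ge> 1")
    case False
    then have "- 1 / (1 - \<gamma>) \<le> (b powr (1 - \<gamma>) - 1) / (1 - \<gamma>)"
      by (intro divide_right_mono) auto
    then show ?thesis
      using True False by (simp add: tsallis_log_def)
  qed (use True in \<open>auto simp: tsallis_log_def\<close>)
next
  case False
  then show ?thesis
    using assms tsallis_ln_mono[of a b \<gamma>] by (simp add: tsallis_log_pos)
qed

lemma tsallis_gap_nonpos:
  assumes "0 \<le> p" "p \<le> q"
  shows "tsallis_gap \<gamma> p q \<le> 0"
  using tsallis_log_mono[OF assms, of \<gamma>] tsallis_log_not_PInf[of \<gamma> q]
  by (cases "tsallis_log \<gamma> p"; cases "tsallis_log \<gamma> q") (auto simp: tsallis_gap_def tsallis_minus_def)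

lemma tsallis_ln_increment_mono_gamma:
  assumes "0 < q" "q \<le> p" "p \<le> 1" "\<gamma>1 \<le> \<gamma>2"
  shows "tsallis_ln \<gamma>1 p - tsallis_ln \<gamma>1 q \<le> tsallis_ln \<gamma>2 p - tsallis_ln \<gamma>2 q"
proof -
  have "tsallis_ln \<gamma>2 q - tsallis_ln \<gamma>1 q \<le> tsallis_ln \<gamma>2 p - tsallis_ln \<gamma>1 p"
  proof (rule DERIV_nonneg_imp_nondecreasing[of q p])
    fix x assume "q \<le> x" "x \<le> p"
    with assms show "\<exists>y. ((\<lambda>x. tsallis_ln \<gamma>2 x - tsallis_ln \<gamma>1 x) has_real_derivative y) (at x) \<and> y \<ge> 0"
      by (intro exI[of _ "x powr (- \<gamma>2) - x powr (- \<gamma>1)"])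
         (auto intro!: derivative_intros has_real_derivative_tsallis_ln powr_mono')
  qed (fact assms)
  then show ?thesis
    by simp
qed

lemma powr_div_mono_gamma:
  fixes p :: real
  assumes "0 < p" "p \<le> 1" "\<gamma>1 \<le> \<gamma>2" "\<gamma>2 < 1"
  shows "p powr (1 - \<gamma>1) / (1 - \<gamma>1) \<le> p powr (1 - \<gamma>2) / (1 - \<gamma>2)"
proof -
  have "p powr (1 - \<gamma>1) / (1 - \<gamma>1) \<le> p powr (1 - \<gamma>2) / (1 - \<gamma>1)"
    using assms by (intro divide_right_mono powr_mono') auto
  also have "\<dots> \<le> p powr (1 - \<gamma>2) / (1 - \<gamma>2)"
    using assms by (intro divide_left_mono) auto
  finally show ?thesis .
qed

lemma tsallis_gap_mono_gamma:
  assumes "0 \<le> q" "q < p" "p \<le> 1" "\<gamma>1 \<le> \<gamma>2"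
  shows "tsallis_gap \<gamma>1 p q \<le> tsallis_gap \<gamma>2 p q"
proof (cases "q = 0")
  case q0: True
  \<comment> \<open>then the gap is p powr (1 - \<gamma>) / (1 - \<gamma>) for \<gamma> < 1 and \<infinity> otherwise\<close>
  have p: "p > 0"
    using assms by simp
  show ?thesis
  proof (cases "\<gamma>2 < 1")
    case True
    have "(p powr (1 - \<gamma>1) - 1) / (1 - \<gamma>1) + 1 / (1 - \<gamma>1)
        \<le> (p powr (1 - \<gamma>2) - 1) / (1 - \<gamma>2) + 1 / (1 - \<gamma>2)"
      using powr_div_mono_gamma[OF p assms(3,4) True] by (simp add: diff_divide_distrib)
    with True q0 p assms(4) show ?thesis
      by (simp add: tsallis_gap_def tsallis_log_def tsallis_minus_def)
  next
    case False
    then show ?thesis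
      using q0 p by (simp add: tsallis_gap_def tsallis_log_def tsallis_minus_def)
  qed
next
  case False
  with assms show ?thesis
    using tsallis_ln_increment_mono_gamma[of q p \<gamma>1 \<gamma>2]
    by (simp add: tsallis_gap_def tsallis_log_pos tsallis_minus_def)
qed

lemma tsallis_gap_le_max_zero:
  assumes "0 \<le> p" "p \<le> 1" "0 \<le> q" "\<gamma>1 \<le> \<gamma>2"
  shows "tsallis_gap \<gamma>1 p q \<le> max 0 (tsallis_gap \<gamma>2 p q)"
proof (cases "p \<le> q")
  case True
  then show ?thesis
    using tsallis_gap_nonpos[OF assms(1) True] by (simp add: le_max_iff_disj)
next
  case False
  then show ?thesis
    using tsallis_gap_mono_gamma[of q p \<gamma>1 \<gamma>2] assms by (simp add: le_max_iff_disj)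
qed

theorem proposition2:
  fixes P Q :: "'a measure"
  assumes "prob_space P" and "prob_space Q" and "sets P = sets Q"
  shows "\<forall>\<gamma>1 \<gamma>2. 0 < \<gamma>1 \<longrightarrow> \<gamma>1 \<le> \<gamma>2 \<longrightarrow>
           tsallis_max_div \<gamma>1 P Q \<le> tsallis_max_div \<gamma>2 P Q"
proof (intro allI impI)
  fix \<gamma>1 \<gamma>2 :: real
  assume "0 < \<gamma>1" "\<gamma>1 \<le> \<gamma>2"
  interpret P: prob_space P by fact
  interpret Q: prob_space Q by fact
  let ?gap = "\<lambda>\<gamma> B. tsallis_gap \<gamma> (P.prob B) (Q.prob B)"
  have D_eq: "tsallis_max_div \<gamma> P Q = (SUP B \<in> sets P. ?gap \<gamma> B)" for \<gamma>
    by (simp add: tsallis_max_div_def tsallis_gap_def)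
  have gap_le_D2: "?gap \<gamma>2 B \<le> tsallis_max_div \<gamma>2 P Q" if "B \<in> sets P" for B
    unfolding D_eq using that by (rule SUP_upper)
  have "space P = space Q"
    using assms(3) by (rule sets_eq_imp_space_eq)
  then have "P.prob (space P) = 1" "Q.prob (space P) = 1"
    using P.prob_space Q.prob_space by simp_all
  then have "?gap \<gamma>2 (space P) = 0"
    by (simp add: tsallis_gap_def tsallis_log_def tsallis_minus_def)
  then have D2_nonneg: "0 \<le> tsallis_max_div \<gamma>2 P Q"
    using gap_le_D2[OF sets.top] by simp
  show "tsallis_max_div \<gamma>1 P Q \<le> tsallis_max_div \<gamma>2 P Q"
    unfolding D_eq[of \<gamma>1]
  proof (rule SUP_least)
    fix B assume "B \<in> sets P"
    have "?gap \<gamma>1 B \<le> max 0 (?gap \<gamma>2 B)"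
      using \<open>\<gamma>1 \<le> \<gamma>2\<close> by (intro tsallis_gap_le_max_zero) auto
    also have "\<dots> \<le> tsallis_max_div \<gamma>2 P Q"
      using D2_nonneg gap_le_D2[OF \<open>B \<in> sets P\<close>] by simp
    finally show "?gap \<gamma>1 B \<le> tsallis_max_div \<gamma>2 P Q" .
  qed
qed

end
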